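(* Let $\alpha\in[0,\pi/2)$, $A\in\Pi^n_{s,\alpha}$ and $q\in\mathbb{C}$ with $0<|q|\le1$. Then \[ \frac{|q|^2\cos^2\alpha}{2}\|A^*A+AA^*\|\le w_q^2(A)\le\left(\sqrt{(1-|q|^2)(1+2\sin^2(\alpha))}+|q|\right)^2\frac{\|A^*A+AA^*\|}{2}. \]
   Context: $M_n$ is the algebra of complex $n\times n$ matrices with the operator norm $\|\cdot\|$. For $|q|\le1$, $w_q(A)=\sup\{|\langle Ax,y\rangle|: \|x\|=\|y\|=1,\ \langle x,y\rangle=q\}$. $W(A)=\{\langle Ax,x\rangle:\|x\|=1\}$, $S_\alpha=\{z:\operatorname{Re}z>0,\ |\operatorname{Im}z|\le\tan(\alpha)\operatorname{Re}z\}$ and $\Pi^n_{s,\alpha}=\{A\in M_n: W(A)\subseteq S_\alpha\}$. *)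

theory Defs
  imports "HOL-Analysis.Analysis"
begin

text \<open>Complex n x n matrices are modelled as complex^'n^'n, vectors as complex^'n
  (the norm on complex^'n is the Euclidean norm).\<close>

definition cinner :: "complex^'n \<Rightarrow> complex^'n \<Rightarrow> complex" where
  "cinner x y = (\<Sum>i\<in>UNIV. x $ i * cnj (y $ i))"

definition cadj :: "complex^'n^'n \<Rightarrow> complex^'n^'n" where
  "cadj A = (\<chi> i j. cnj (A $ j $ i))"

definition opnorm :: "complex^'n^'n \<Rightarrow> real" where
  "opnorm A = onorm (\<lambda>x::complex^'n. A *v x)"

definition qnumrad :: "complex \<Rightarrow> complex^'n^'n \<Rightarrow> real" where
  "qnumrad q A = Sup {cmod (cinner (A *v x) y) | x y.
      norm x = 1 \<and> norm y = 1 \<and> cinner x y = q}"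

definition numrange :: "complex^'n^'n \<Rightarrow> complex set" where
  "numrange A = {cinner (A *v x) x | x. norm x = 1}"

definition sector :: "real \<Rightarrow> complex set" where
  "sector \<alpha> = {z. Re z > 0 \<and> \<bar>Im z\<bar> \<le> tan \<alpha> * Re z}"

definition sectorial :: "real \<Rightarrow> (complex^'n^'n) set" where
  "sectorial \<alpha> = {A. numrange A \<subseteq> sector \<alpha>}"

end

theory Submission
  imports Defs
begin

(*
  Upper bound: a unit y with <x,y> = q splits as y = cnj(q) x + w with w orthogonal to x and
  |w|^2 = 1 - |q|^2, so <Ax,y> = q <Ax,x> + <Ax,w>. Put P = A^* A + A A^*. Kittaneh's bound
  |<Av,v>|^2 <= |Av| |A^* v| |v|^2 <= ||P||/2 |v|^4 controls the first term. The second term is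
  bounded by Cauchy-Schwarz, |<Ax,w>|^2 <= ||P|| |w|^2, and by the sectorial Cauchy-Schwarz
  inequality |<Ax,w>|^2 <= sec^2(alpha) Re<Ax,x> Re<Aw,w> <= sec^2(alpha) ||P||/2 |w|^2;
  finally min(2, sec^2 alpha) <= 1 + 2 sin^2 alpha.

  Lower bound: every unit x has a unit partner y with <x,y> = q and |<Ax,y>| >= |q| |<Ax,x>|,
  so w(A) <= w_q(A) / |q|. Writing A = Re A + i Im A, the sector condition gives
  ||Re A|| <= w(A) and ||Im A|| <= tan(alpha) w(A), and <Pv,v> = 2 (|Re A v|^2 + |Im A v|^2),
  hence ||P|| <= 2 sec^2(alpha) w(A)^2.
*)

lemma cinner_add_left: "cinner (x + y) z = cinner x z + cinner y z"
  by (simp add: cinner_def distrib_right sum.distrib)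

lemma cinner_add_right: "cinner x (y + z) = cinner x y + cinner x z"
  by (simp add: cinner_def distrib_left sum.distrib)

lemma cinner_diff_left: "cinner (x - y) z = cinner x z - cinner y z"
  by (simp add: cinner_def left_diff_distrib sum_subtractf)

lemma cinner_diff_right: "cinner x (y - z) = cinner x y - cinner x z"
  by (simp add: cinner_def right_diff_distrib sum_subtractf)

lemma cinner_scalar_left: "cinner (c *s x) y = c * cinner x y"
  by (simp add: cinner_def sum_distrib_left mult.assoc)

lemma cinner_scalar_right: "cinner x (c *s y) = cnj c * cinner x y"
  by (simp add: cinner_def sum_distrib_left mult_ac)

lemma cinner_zero_left [simp]: "cinner 0 x = 0"
  by (simp add: cinner_def)

lemma cinner_commute: "cinner y x = cnj (cinner x y)"
  by (simp add: cinner_def mult.commute)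

lemma cinner_self: "cinner v v = of_real ((norm v)\<^sup>2)"
proof -
  have "cinner v v = (\<Sum>i\<in>UNIV. of_real ((cmod (v $ i))\<^sup>2))"
    unfolding cinner_def by (rule sum.cong[OF refl]) (rule complex_norm_square[symmetric])
  then show ?thesis
    by (simp add: norm_vec_def L2_set_def sum_nonneg)
qed

lemma Re_cinner: "Re (cinner x y) = inner x y"
  by (simp add: cinner_def inner_vec_def inner_complex_def Re_sum)

lemma norm_vector_scalar_mult: "norm (c *s v) = cmod c * norm (v :: complex^'n)"
  by (simp add: norm_vec_def norm_mult L2_set_right_distrib)

lemma cinner_adjoint: "cinner (B *v x) y = cinner x (cadj B *v y)"
proof -
  have "cinner (B *v x) y = (\<Sum>i\<in>UNIV. \<Sum>j\<in>UNIV. B $ i $ j * x $ j * cnj (y $ i))"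
    by (simp add: cinner_def matrix_vector_mult_def sum_distrib_right)
  also have "\<dots> = (\<Sum>j\<in>UNIV. \<Sum>i\<in>UNIV. B $ i $ j * x $ j * cnj (y $ i))"
    by (rule sum.swap)
  also have "\<dots> = cinner x (cadj B *v y)"
    by (simp add: cinner_def cadj_def matrix_vector_mult_def sum_distrib_left mult_ac)
  finally show ?thesis .
qed

lemma cadj_cadj [simp]: "cadj (cadj B) = B"
  by (simp add: cadj_def vec_eq_iff)

lemma cadj_add: "cadj (B + C) = cadj B + cadj C"
  by (simp add: cadj_def vec_eq_iff)

lemma cadj_mult: "cadj (B ** C) = cadj C ** cadj B"
  by (simp add: cadj_def vec_eq_iff matrix_matrix_mult_def mult.commute)

lemma cadj_mat_1: "cadj (mat 1) = mat 1"
  by (simp add: cadj_def vec_eq_iff mat_def)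

(* herm_part c A is the Hermitian part of cA; the paper's Re A and Im A are herm_part 1 A and
   herm_part (-i) A. *)
definition herm_part :: "complex \<Rightarrow> complex^'n^'n \<Rightarrow> complex^'n^'n" where
  "herm_part c A = (\<chi> i j. (c * A $ i $ j + cnj (c * A $ j $ i)) / 2)"

lemma cadj_herm_part: "cadj (herm_part c A) = herm_part c A"
  by (simp add: cadj_def herm_part_def vec_eq_iff add.commute)

lemma herm_part_mult_vec:
  "herm_part c A *v v = (1 / 2) *s (c *s (A *v v) + cnj c *s (cadj A *v v))"
  by (simp add: vec_eq_iff herm_part_def cadj_def matrix_vector_mult_def sum_distrib_left
      sum_divide_distrib sum.distrib[symmetric] field_simps)

lemma cinner_herm_part:
  "cinner (herm_part c A *v x) y = (c * cinner (A *v x) y + cnj (c * cinner (A *v y) x)) / 2"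
  by (simp add: herm_part_mult_vec cinner_scalar_left cinner_add_left cinner_adjoint[of A y]
      cinner_commute[of _ "cadj A *v x"])

lemma cinner_herm_part_self: "cinner (herm_part c A *v v) v = of_real (Re (c * cinner (A *v v) v))"
  unfolding cinner_herm_part complex_add_cnj by simp

lemma herm_part_decomp:
  "A *v v = herm_part 1 A *v v + \<i> *s (herm_part (-\<i>) A *v v)"
  "cadj A *v v = herm_part 1 A *v v - \<i> *s (herm_part (-\<i>) A *v v)"
  by (simp_all add: herm_part_mult_vec vec_eq_iff field_simps)

lemma discriminant_le_of_quadratic_nonneg:
  fixes a b m :: real
  assumes "0 \<le> b" "0 \<le> m" and nonneg: "\<And>r. 0 \<le> a - 2 * r * m + r\<^sup>2 * m * b"
  shows "m \<le> a * b"
proof (cases "b = 0")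
  case True
  have "0 \<le> a - 2 * ((a + 1) / (2 * m)) * m"
    using nonneg[of "(a + 1) / (2 * m)"] True by simp
  then have "m = 0"
    by (cases "m = 0") (simp_all add: field_simps)
  then show ?thesis using True by simp
next
  case False
  have "0 \<le> a - 2 * (1 / b) * m + (1 / b)\<^sup>2 * m * b" by (rule nonneg)
  also have "\<dots> = (a * b - m) / b" using False by (simp add: field_simps power2_eq_square)
  finally show ?thesis using False assms(1) by (simp add: zero_le_divide_iff)
qed

lemma hermitian_psd_cauchy_schwarz:
  assumes herm: "cadj B = B" and psd: "\<And>v. 0 \<le> Re (cinner (B *v v) v)"
  shows "(cmod (cinner (B *v x) y))\<^sup>2 \<le> Re (cinner (B *v x) x) * Re (cinner (B *v y) y)"
proof -
  define z where "z = cinner (B *v x) y"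
  have yx: "cinner (B *v y) x = cnj z"
    unfolding z_def by (metis cinner_adjoint cinner_commute herm)
  have zz: "z * cnj z = of_real ((cmod z)\<^sup>2)" by (rule complex_norm_square[symmetric])
  have "0 \<le> Re (cinner (B *v x) x) - 2 * r * (cmod z)\<^sup>2 + r\<^sup>2 * (cmod z)\<^sup>2 * Re (cinner (B *v y) y)"
    for r :: real
  proof -
    let ?u = "x - (of_real r * z) *s y"
    have "cinner (B *v ?u) ?u = cinner (B *v x) x - 2 * of_real r * (z * cnj z)
        + (of_real r)\<^sup>2 * (z * cnj z) * cinner (B *v y) y"
      by (simp add: matrix_vector_mult_diff_distrib vector_scalar_commute cinner_diff_left
          cinner_diff_right cinner_scalar_left cinner_scalar_right yx z_def[symmetric]
          algebra_simps power2_eq_square)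
    then have "Re (cinner (B *v ?u) ?u) = Re (cinner (B *v x) x) - 2 * r * (cmod z)\<^sup>2
        + r\<^sup>2 * (cmod z)\<^sup>2 * Re (cinner (B *v y) y)"
      unfolding zz by simp
    then show ?thesis using psd by metis
  qed
  then show ?thesis
    unfolding z_def[symmetric] by (intro discriminant_le_of_quadratic_nonneg psd) auto
qed

lemma cinner_cauchy_schwarz: "cmod (cinner x y) \<le> norm x * norm y"
proof -
  have "(cmod (cinner (mat 1 *v x) y))\<^sup>2 \<le> Re (cinner (mat 1 *v x) x) * Re (cinner (mat 1 *v y) y)"
    by (rule hermitian_psd_cauchy_schwarz[OF cadj_mat_1]) (simp add: cinner_self)
  then have "(cmod (cinner x y))\<^sup>2 \<le> (norm x * norm y)\<^sup>2"
    by (simp add: cinner_self power_mult_distrib)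
  then show ?thesis by (rule power2_le_imp_le) simp
qed

lemma norm_mult_vec_le_opnorm: "norm (B *v v) \<le> opnorm B * norm v"
  unfolding opnorm_def by (rule onorm) simp

lemma opnorm_le: "(\<And>v. norm (B *v v) \<le> c * norm v) \<Longrightarrow> opnorm B \<le> c"
  unfolding opnorm_def by (rule onorm_le)

lemma opnorm_nonneg: "0 \<le> opnorm B"
  unfolding opnorm_def by (rule onorm_pos_le) simp

lemma norm_mult_vec_le_of_cinner_le:
  assumes "0 \<le> c" and bound: "\<And>x y. cmod (cinner (B *v x) y) \<le> c * norm x * norm y"
  shows "norm (B *v v) \<le> c * norm v"
proof (cases "B *v v = 0")
  case False
  have "(norm (B *v v))\<^sup>2 = cmod (cinner (B *v v) (B *v v))"
    by (simp add: cinner_self norm_power)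
  also have "\<dots> \<le> c * norm v * norm (B *v v)" by (rule bound)
  finally show ?thesis using False by (simp add: power2_eq_square)
qed (use assms in simp)

lemma psd_norm_mult_vec_le:
  assumes "cadj B = B" "0 \<le> c"
    and psd: "\<And>v. 0 \<le> Re (cinner (B *v v) v)"
    and bound: "\<And>v. Re (cinner (B *v v) v) \<le> c * (norm v)\<^sup>2"
  shows "norm (B *v v) \<le> c * norm v"
proof (rule norm_mult_vec_le_of_cinner_le)
  fix x y
  have "(cmod (cinner (B *v x) y))\<^sup>2 \<le> Re (cinner (B *v x) x) * Re (cinner (B *v y) y)"
    using assms(1) psd by (rule hermitian_psd_cauchy_schwarz)
  also have "\<dots> \<le> (c * (norm x)\<^sup>2) * (c * (norm y)\<^sup>2)"
    by (intro mult_mono bound psd) (use \<open>0 \<le> c\<close> in simp)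
  also have "\<dots> = (c * norm x * norm y)\<^sup>2" by algebra
  finally show "cmod (cinner (B *v x) y) \<le> c * norm x * norm y"
    by (rule power2_le_imp_le) (use \<open>0 \<le> c\<close> in simp)
qed (rule \<open>0 \<le> c\<close>)

lemma cinner_adj_sum_self:
  "cinner ((cadj A ** A + A ** cadj A) *v v) v = of_real ((norm (A *v v))\<^sup>2 + (norm (cadj A *v v))\<^sup>2)"
  by (simp add: matrix_vector_mult_add_rdistrib matrix_vector_mul_assoc[symmetric] cinner_add_left
      cinner_adjoint[of "cadj A"] cinner_adjoint[of A] cinner_self)

lemma norm_sq_add_adj_le_opnorm:
  "(norm (A *v v))\<^sup>2 + (norm (cadj A *v v))\<^sup>2 \<le> opnorm (cadj A ** A + A ** cadj A) * (norm v)\<^sup>2"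
proof -
  let ?P = "cadj A ** A + A ** cadj A"
  have "(norm (A *v v))\<^sup>2 + (norm (cadj A *v v))\<^sup>2 = Re (cinner (?P *v v) v)"
    by (simp add: cinner_adj_sum_self)
  also have "\<dots> \<le> norm (?P *v v) * norm v"
    using complex_Re_le_cmod cinner_cauchy_schwarz order_trans by blast
  also have "\<dots> \<le> opnorm ?P * norm v * norm v"
    by (intro mult_right_mono norm_mult_vec_le_opnorm) simp
  finally show ?thesis by (simp add: power2_eq_square mult.assoc)
qed

lemma norm_sq_add_adj_eq:
  "(norm (A *v v))\<^sup>2 + (norm (cadj A *v v))\<^sup>2
    = 2 * ((norm (herm_part 1 A *v v))\<^sup>2 + (norm (herm_part (-\<i>) A *v v))\<^sup>2)"
proof -
  let ?h = "herm_part 1 A *v v" and ?k = "\<i> *s (herm_part (-\<i>) A *v v)"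
  have "(norm (?h + ?k))\<^sup>2 + (norm (?h - ?k))\<^sup>2 = 2 * ((norm ?h)\<^sup>2 + (norm ?k)\<^sup>2)"
    using dot_norm[of ?h ?k] dot_norm_neg[of ?h ?k] by (simp add: field_simps)
  then show ?thesis
    unfolding herm_part_decomp[of A v] by (simp add: norm_vector_scalar_mult)
qed

lemma cmod_cinner_sq_le_opnorm_adj_sum:
  assumes "norm x = 1"
  shows "(cmod (cinner (A *v x) w))\<^sup>2 \<le> opnorm (cadj A ** A + A ** cadj A) * (norm w)\<^sup>2"
proof -
  have "(cmod (cinner (A *v x) w))\<^sup>2 \<le> (norm (A *v x))\<^sup>2 * (norm w)\<^sup>2"
    unfolding power_mult_distrib[symmetric] by (intro power_mono cinner_cauchy_schwarz) simp
  also have "\<dots> \<le> ((norm (A *v x))\<^sup>2 + (norm (cadj A *v x))\<^sup>2) * (norm w)\<^sup>2"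
    by (intro mult_right_mono) simp_all
  also have "\<dots> \<le> opnorm (cadj A ** A + A ** cadj A) * (norm w)\<^sup>2"
    using norm_sq_add_adj_le_opnorm[of A x] assms by (intro mult_right_mono) simp_all
  finally show ?thesis .
qed

lemma cmod_cinner_mult_self_le_adj_sum:
  "cmod (cinner (A *v v) v) \<le> sqrt (opnorm (cadj A ** A + A ** cadj A) / 2) * (norm v)\<^sup>2"
proof -
  let ?a = "norm (A *v v)" and ?b = "norm (cadj A *v v)" and ?m = "opnorm (cadj A ** A + A ** cadj A) / 2"
  have a: "cmod (cinner (A *v v) v) \<le> ?a * norm v" by (rule cinner_cauchy_schwarz)
  have b: "cmod (cinner (A *v v) v) \<le> norm v * ?b"
    unfolding cinner_adjoint by (rule cinner_cauchy_schwarz)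
  have "(cmod (cinner (A *v v) v))\<^sup>2 \<le> (?a * ?b) * (norm v)\<^sup>2"
    using mult_mono[OF a b] by (simp add: power2_eq_square mult_ac)
  also have "\<dots> \<le> ((?a\<^sup>2 + ?b\<^sup>2) / 2) * (norm v)\<^sup>2"
    using sum_squares_bound[of ?a ?b] by (intro mult_right_mono) (simp_all add: field_simps)
  also have "\<dots> \<le> ?m * (norm v)\<^sup>2 * (norm v)\<^sup>2"
    using norm_sq_add_adj_le_opnorm[of A v] by (intro mult_right_mono) simp_all
  also have "\<dots> = (sqrt ?m)\<^sup>2 * ((norm v)\<^sup>2)\<^sup>2"
    using opnorm_nonneg[of "cadj A ** A + A ** cadj A"] by (simp add: power2_eq_square)
  also have "\<dots> = (sqrt ?m * (norm v)\<^sup>2)\<^sup>2"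
    by (simp only: power_mult_distrib)
  finally show ?thesis by (rule power2_le_imp_le) (simp add: opnorm_nonneg)
qed

lemma cinner_mult_self_normalize:
  fixes B :: "complex^'n^'n"
  obtains u where "norm u = 1" "cinner (B *v v) v = of_real ((norm v)\<^sup>2) * cinner (B *v u) u"
proof (cases "v = 0")
  case True
  obtain u :: "complex^'n" where "norm u = 1" using vector_choose_size zero_le_one by blast
  with True show ?thesis by (intro that[of u]) simp_all
next
  case False
  let ?u = "of_real (1 / norm v) *s v"
  have "v = of_real (norm v) *s ?u" using False by (simp add: vector_smult_assoc)
  then have "cinner (B *v v) v = of_real ((norm v)\<^sup>2) * cinner (B *v ?u) ?u"
    by (metis (no_types) cinner_scalar_left cinner_scalar_right vector_scalar_commute
        complex_cnj_complex_of_real mult.assoc mult.commute of_real_mult power2_eq_square)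
  moreover have "norm ?u = 1" using False by (simp add: norm_vector_scalar_mult norm_divide)
  ultimately show ?thesis by (intro that)
qed

lemma exists_unit_orthogonal:
  fixes x :: "complex^'n"
  assumes "CARD('n) \<ge> 2"
  obtains z where "norm z = 1" "cinner x z = 0"
proof -
  \<comment> \<open>complex orthogonality to x is real orthogonality to x and i x\<close>
  have "card {x, \<i> *s x} \<le> 2" by (simp add: card_insert_if)
  then have "dim {x, \<i> *s x} < DIM(complex^'n)"
    using dim_le_card'[of "{x, \<i> *s x}"] assms by simp
  then obtain z where "z \<noteq> 0" and orth: "\<And>y. y \<in> span {x, \<i> *s x} \<Longrightarrow> orthogonal z y"
    by (rule orthogonal_to_subspace_exists) blast
  have "Re (cinner x z) = 0" "Re (cinner (\<i> *s x) z) = 0"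
    using orth[of x] orth[of "\<i> *s x"] by (simp_all add: span_base Re_cinner orthogonal_def inner_commute)
  then have "cinner x z = 0" by (simp add: cinner_scalar_left complex_eq_iff)
  then show ?thesis
    using that[of "of_real (1 / norm z) *s z"] \<open>z \<noteq> 0\<close>
    by (simp add: norm_vector_scalar_mult norm_divide cinner_scalar_right)
qed

lemma exists_unit_cinner_eq:
  fixes x u :: "complex^'n"
  assumes "CARD('n) \<ge> 2" "norm x = 1" "cmod q \<le> 1"
  obtains y where "norm y = 1" "cinner x y = q" "cmod q * cmod (cinner u x) \<le> cmod (cinner u y)"
proof -
  obtain z where z: "norm z = 1" "cinner x z = 0"
    using exists_unit_orthogonal[OF assms(1)] .
  define r where "r = sqrt (1 - (cmod q)\<^sup>2)"
  have r2: "r\<^sup>2 = 1 - (cmod q)\<^sup>2"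
    unfolding r_def using assms(3) by (simp add: abs_square_le_1)
  define y where "y s = cnj q *s x + of_real (s * r) *s z" for s :: real
  have xx: "cinner x x = 1" "cinner z z = 1" and zx: "cinner z x = 0"
    using assms(2) z by (simp_all add: cinner_self cinner_commute[of z x])
  have xy: "cinner x (y s) = q" for s
    by (simp add: y_def cinner_add_right cinner_scalar_right xx z(2))
  have ny: "norm (y s) = 1" if "s\<^sup>2 = 1" for s
  proof -
    have "cinner (y s) (y s) = q * cnj q + of_real (s\<^sup>2 * r\<^sup>2)"
      by (simp add: y_def cinner_add_left cinner_add_right cinner_scalar_left
          cinner_scalar_right xx z(2) zx power2_eq_square mult_ac)
    also have "\<dots> = 1" using that by (simp add: r2 complex_norm_square[symmetric])
    finally have "(norm (y s))\<^sup>2 = 1" by (simp only: cinner_self of_real_eq_1_iff)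
    then show ?thesis using norm_ge_zero[of "y s"] by (auto simp: power2_eq_1_iff)
  qed
  define p where "p = q * cinner u x"
  define b where "b = of_real r * cinner u z"
  have uy: "cinner u (y s) = p + of_real s * b" for s
    by (simp add: y_def p_def b_def cinner_add_right cinner_scalar_right)
  have "2 * cmod p \<le> cmod (p + b) + cmod (p - b)"
    using norm_triangle_ineq[of "p + b" "p - b"] by simp
  then consider "cmod p \<le> cmod (p + b)" | "cmod p \<le> cmod (p - b)" by linarith
  then obtain s :: real where "s\<^sup>2 = 1" "cmod p \<le> cmod (cinner u (y s))"
  proof cases
    case 1
    then show ?thesis using that[of 1] uy[of 1] by simp
  next
    case 2
    then show ?thesis using that[of "-1"] uy[of "-1"] by simp
  qed
  then show ?thesis
    using that[of "y s"] ny xy by (simp add: p_def norm_mult)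
qed

lemma unit_vector_decomp:
  fixes x y :: "complex^'n"
  assumes "norm x = 1" "norm y = 1"
  obtains w where "y = cnj (cinner x y) *s x + w" "(norm w)\<^sup>2 = 1 - (cmod (cinner x y))\<^sup>2"
proof
  let ?q = "cinner x y" and ?w = "y - cnj (cinner x y) *s x"
  show "y = cnj ?q *s x + ?w" by simp
  have "cinner x x = 1" "cinner y y = 1"
    using assms by (simp_all add: cinner_self)
  then have "cinner ?w ?w = 1 - ?q * cnj ?q"
    by (simp add: cinner_diff_left cinner_diff_right cinner_scalar_left cinner_scalar_right
        cinner_commute[of y x])
  then have "of_real ((norm ?w)\<^sup>2) = (of_real (1 - (cmod ?q)\<^sup>2) :: complex)"
    by (simp add: cinner_self complex_norm_square[symmetric] flip: of_real_power)
  then show "(norm ?w)\<^sup>2 = 1 - (cmod ?q)\<^sup>2"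
    by (rule of_real_eq_iff[THEN iffD1])
qed

lemma cmod_cinner_le_qnumrad:
  fixes A :: "complex^'n^'n"
  assumes "norm x = 1" "norm y = 1" "cinner x y = q"
  shows "cmod (cinner (A *v x) y) \<le> qnumrad q A"
  unfolding qnumrad_def
proof (rule cSup_upper)
  show "cmod (cinner (A *v x) y) \<in> {cmod (cinner (A *v x) y) | x y. norm x = 1 \<and> norm y = 1 \<and> cinner x y = q}"
    using assms by blast
  have "cmod (cinner (A *v x) y) \<le> opnorm A" if "norm x = 1" "norm y = 1" for x y :: "complex^'n"
    using cinner_cauchy_schwarz[of "A *v x" y] norm_mult_vec_le_opnorm[of A x] that by simp
  then show "bdd_above {cmod (cinner (A *v x) y) | x y. norm x = 1 \<and> norm y = 1 \<and> cinner x y = q}"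
    by (intro bdd_aboveI[of _ "opnorm A"]) auto
qed

lemma qnumrad_le:
  fixes A :: "complex^'n^'n"
  assumes "CARD('n) \<ge> 2" "cmod q \<le> 1"
    and bound: "\<And>x y. norm x = 1 \<Longrightarrow> norm y = 1 \<Longrightarrow> cinner x y = q
      \<Longrightarrow> cmod (cinner (A *v x) y) \<le> R"
  shows "qnumrad q A \<le> R"
  unfolding qnumrad_def
proof (rule cSup_least)
  obtain x :: "complex^'n" where x: "norm x = 1" using vector_choose_size zero_le_one by blast
  obtain y where "norm y = 1" "cinner x y = q"
    using exists_unit_cinner_eq[OF assms(1) x assms(2)] by blast
  with x show "{cmod (cinner (A *v x) y) | x y. norm x = 1 \<and> norm y = 1 \<and> cinner x y = q} \<noteq> {}"
    by blast
next
  fix r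
  assume "r \<in> {cmod (cinner (A *v x) y) | x y. norm x = 1 \<and> norm y = 1 \<and> cinner x y = q}"
  then show "r \<le> R" using bound by auto
qed

lemma qnumrad_nonneg:
  fixes A :: "complex^'n^'n"
  assumes "CARD('n) \<ge> 2" "cmod q \<le> 1"
  shows "0 \<le> qnumrad q A"
proof -
  obtain x :: "complex^'n" where x: "norm x = 1" using vector_choose_size zero_le_one by blast
  obtain y where y: "norm y = 1" "cinner x y = q"
    using exists_unit_cinner_eq[OF assms(1) x assms(2)] by blast
  show ?thesis
    using norm_ge_zero cmod_cinner_le_qnumrad[OF x y, of A] by (rule order_trans)
qed

lemma cmod_cinner_mult_self_le_qnumrad:
  fixes A :: "complex^'n^'n"
  assumes "CARD('n) \<ge> 2" "0 < cmod q" "cmod q \<le> 1"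
  shows "cmod (cinner (A *v v) v) \<le> qnumrad q A / cmod q * (norm v)\<^sup>2"
proof -
  obtain u where u: "norm u = 1" and v: "cinner (A *v v) v = of_real ((norm v)\<^sup>2) * cinner (A *v u) u"
    by (rule cinner_mult_self_normalize)
  obtain y where y: "norm y = 1" "cinner u y = q"
    and partner: "cmod q * cmod (cinner (A *v u) u) \<le> cmod (cinner (A *v u) y)"
    using exists_unit_cinner_eq[OF assms(1) u assms(3)] by blast
  have "cmod (cinner (A *v u) y) \<le> qnumrad q A"
    using u y by (rule cmod_cinner_le_qnumrad)
  with partner have "cmod q * cmod (cinner (A *v u) u) \<le> qnumrad q A" by linarith
  then have "cmod (cinner (A *v u) u) \<le> qnumrad q A / cmod q"
    using assms(2) by (simp add: pos_le_divide_eq mult.commute)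
  then have "(norm v)\<^sup>2 * cmod (cinner (A *v u) u) \<le> (norm v)\<^sup>2 * (qnumrad q A / cmod q)"
    by (rule mult_left_mono) simp
  then show ?thesis
    unfolding v norm_mult by (simp add: norm_power mult.commute)
qed

lemma sectorial_cinner_bounds:
  assumes "A \<in> sectorial \<alpha>"
  shows "0 \<le> Re (cinner (A *v v) v)"
    and "\<bar>Im (cinner (A *v v) v)\<bar> \<le> tan \<alpha> * Re (cinner (A *v v) v)"
proof -
  obtain u where "norm u = 1" and v: "cinner (A *v v) v = of_real ((norm v)\<^sup>2) * cinner (A *v u) u"
    by (rule cinner_mult_self_normalize)
  then have "cinner (A *v u) u \<in> sector \<alpha>"
    using assms by (auto simp: sectorial_def numrange_def)
  then have "0 < Re (cinner (A *v u) u)" "\<bar>Im (cinner (A *v u) u)\<bar> \<le> tan \<alpha> * Re (cinner (A *v u) u)"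
    by (auto simp: sector_def)
  then have "(norm v)\<^sup>2 * \<bar>Im (cinner (A *v u) u)\<bar> \<le> (norm v)\<^sup>2 * (tan \<alpha> * Re (cinner (A *v u) u))"
    by (simp add: mult_left_mono)
  with \<open>0 < Re (cinner (A *v u) u)\<close> show "0 \<le> Re (cinner (A *v v) v)"
    and "\<bar>Im (cinner (A *v v) v)\<bar> \<le> tan \<alpha> * Re (cinner (A *v v) v)"
    unfolding v by (simp_all add: abs_mult mult.left_commute)
qed

lemma sq_add_le_mult_add:
  fixes a b c d u v :: real
  assumes "0 \<le> a" "0 \<le> b" "0 \<le> c" "0 \<le> d" "0 \<le> u" "0 \<le> v"
    and "u\<^sup>2 \<le> a * b" "v\<^sup>2 \<le> c * d"
  shows "(u + v)\<^sup>2 \<le> (a + c) * (b + d)"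
proof -
  have "u\<^sup>2 * v\<^sup>2 \<le> (a * b) * (c * d)"
    by (rule mult_mono) (use assms in auto)
  then have "(2 * u * v)\<^sup>2 \<le> (a * d + c * b)\<^sup>2"
    using zero_le_power2[of "a * d - c * b"] by (simp add: power2_eq_square algebra_simps)
  then have "2 * u * v \<le> a * d + c * b"
    by (rule power2_le_imp_le) (use assms in simp)
  then show ?thesis
    using assms by (simp add: power2_eq_square algebra_simps)
qed

context
  fixes A :: "complex^'n^'n" and t :: real
  assumes t: "0 \<le> t"
    and psd: "\<And>v. 0 \<le> Re (cinner (A *v v) v)"
    and sector: "\<And>v. \<bar>Im (cinner (A *v v) v)\<bar> \<le> t * Re (cinner (A *v v) v)"
begin

(* herm_part (t - i) A = t Re A + Im A and herm_part (t + i) A = t Re A - Im A are positive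
   semidefinite by the sector condition. *)
lemma sectorial_herm_parts_bound:
  "(cmod (cinner (herm_part (t - \<i>) A *v x) y) + cmod (cinner (herm_part (t + \<i>) A *v x) y))\<^sup>2
    \<le> 4 * t\<^sup>2 * Re (cinner (A *v x) x) * Re (cinner (A *v y) y)"
proof -
  have Re_P: "Re (cinner (herm_part (t - \<i>) A *v v) v) = t * Re (cinner (A *v v) v) + Im (cinner (A *v v) v)"
    and Re_N: "Re (cinner (herm_part (t + \<i>) A *v v) v) = t * Re (cinner (A *v v) v) - Im (cinner (A *v v) v)"
    for v by (simp_all add: cinner_herm_part_self)
  have psd_P: "0 \<le> Re (cinner (herm_part (t - \<i>) A *v v) v)"
    and psd_N: "0 \<le> Re (cinner (herm_part (t + \<i>) A *v v) v)" for v
    using sector[of v] by (simp_all add: Re_P Re_N abs_le_iff)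
  have "(cmod (cinner (herm_part (t - \<i>) A *v x) y) + cmod (cinner (herm_part (t + \<i>) A *v x) y))\<^sup>2
    \<le> (Re (cinner (herm_part (t - \<i>) A *v x) x) + Re (cinner (herm_part (t + \<i>) A *v x) x))
      * (Re (cinner (herm_part (t - \<i>) A *v y) y) + Re (cinner (herm_part (t + \<i>) A *v y) y))"
    by (intro sq_add_le_mult_add psd_P psd_N norm_ge_zero
        hermitian_psd_cauchy_schwarz[OF cadj_herm_part])
  also have "\<dots> = 4 * t\<^sup>2 * Re (cinner (A *v x) x) * Re (cinner (A *v y) y)"
    by (simp add: Re_P Re_N power2_eq_square)
  finally show ?thesis .
qed

lemma sectorial_im_part_cauchy_schwarz:
  "(cmod (cinner (herm_part (-\<i>) A *v x) y))\<^sup>2 \<le> t\<^sup>2 * Re (cinner (A *v x) x) * Re (cinner (A *v y) y)"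
proof -
  let ?p = "cinner (herm_part (t - \<i>) A *v x) y" and ?n = "cinner (herm_part (t + \<i>) A *v x) y"
  have K: "cinner (herm_part (-\<i>) A *v x) y = (?p - ?n) / 2"
    by (simp add: cinner_herm_part field_simps)
  have "cmod (cinner (herm_part (-\<i>) A *v x) y) = cmod (?p - ?n) / 2"
    unfolding K by (simp add: norm_divide)
  also have "\<dots> \<le> (cmod ?p + cmod ?n) / 2"
    by (simp add: divide_right_mono norm_triangle_ineq4)
  finally have "(cmod (cinner (herm_part (-\<i>) A *v x) y))\<^sup>2 \<le> ((cmod ?p + cmod ?n) / 2)\<^sup>2"
    by (rule power_mono) simp
  with sectorial_herm_parts_bound[of x y] show ?thesis by (simp add: power_divide)
qed

lemma sectorial_cauchy_schwarz:
  "(cmod (cinner (A *v x) y))\<^sup>2 \<le> (1 + t\<^sup>2) * Re (cinner (A *v x) x) * Re (cinner (A *v y) y)"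
proof (cases "t = 0")
  case True
  then have "cinner (herm_part (-\<i>) A *v x) y = 0"
    using sectorial_im_part_cauchy_schwarz[of x y] by simp
  then have "cinner (A *v x) y = cinner (herm_part 1 A *v x) y"
    by (simp add: herm_part_decomp(1)[of A x] cinner_add_left cinner_scalar_left)
  moreover have "(cmod (cinner (herm_part 1 A *v x) y))\<^sup>2
      \<le> Re (cinner (herm_part 1 A *v x) x) * Re (cinner (herm_part 1 A *v y) y)"
    by (rule hermitian_psd_cauchy_schwarz[OF cadj_herm_part]) (simp add: cinner_herm_part_self psd)
  ultimately show ?thesis using True by (simp add: cinner_herm_part_self)
next
  case False
  then have "0 < t" using t by simp
  let ?p = "cinner (herm_part (t - \<i>) A *v x) y" and ?n = "cinner (herm_part (t + \<i>) A *v x) y"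
  have split: "of_real (2 * t) * cinner (A *v x) y = (1 + \<i> * t) * ?p + (1 - \<i> * t) * ?n"
    by (simp add: cinner_herm_part field_simps)
  have "cmod (1 + \<i> * t) = sqrt (1 + t\<^sup>2)" "cmod (1 - \<i> * t) = sqrt (1 + t\<^sup>2)"
    by (simp_all add: cmod_def)
  then have "cmod (of_real (2 * t) * cinner (A *v x) y) \<le> sqrt (1 + t\<^sup>2) * (cmod ?p + cmod ?n)"
    unfolding split using norm_triangle_ineq[of "(1 + \<i> * t) * ?p" "(1 - \<i> * t) * ?n"]
    by (simp add: norm_mult distrib_left)
  then have "(2 * t * cmod (cinner (A *v x) y))\<^sup>2 \<le> (sqrt (1 + t\<^sup>2) * (cmod ?p + cmod ?n))\<^sup>2"
    using \<open>0 < t\<close> by (intro power_mono) (simp_all add: norm_mult)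
  also have "\<dots> = (1 + t\<^sup>2) * (cmod ?p + cmod ?n)\<^sup>2"
    by (simp add: power_mult_distrib)
  also have "\<dots> \<le> (1 + t\<^sup>2) * (4 * t\<^sup>2 * Re (cinner (A *v x) x) * Re (cinner (A *v y) y))"
    by (intro mult_left_mono sectorial_herm_parts_bound) simp
  finally have "(2 * t)\<^sup>2 * (cmod (cinner (A *v x) y))\<^sup>2
      \<le> (2 * t)\<^sup>2 * ((1 + t\<^sup>2) * Re (cinner (A *v x) x) * Re (cinner (A *v y) y))"
    by (simp add: power_mult_distrib algebra_simps)
  then show ?thesis using \<open>0 < t\<close> by simp
qed

lemma cmod_cinner_sq_le_min:
  assumes "norm x = 1"
  shows "(cmod (cinner (A *v x) w))\<^sup>2
    \<le> min 2 (1 + t\<^sup>2) * (opnorm (cadj A ** A + A ** cadj A) / 2) * (norm w)\<^sup>2"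
proof -
  define m where "m = opnorm (cadj A ** A + A ** cadj A) / 2"
  have m: "0 \<le> m" by (simp add: m_def opnorm_nonneg)
  have Re_self: "Re (cinner (A *v v) v) \<le> sqrt m * (norm v)\<^sup>2" for v
    using complex_Re_le_cmod cmod_cinner_mult_self_le_adj_sum unfolding m_def by (rule order_trans)
  have by_opnorm: "(cmod (cinner (A *v x) w))\<^sup>2 \<le> 2 * m * (norm w)\<^sup>2"
    using cmod_cinner_sq_le_opnorm_adj_sum[OF assms] by (simp add: m_def)
  have "(cmod (cinner (A *v x) w))\<^sup>2 \<le> (1 + t\<^sup>2) * (Re (cinner (A *v x) x) * Re (cinner (A *v w) w))"
    using sectorial_cauchy_schwarz by (simp add: mult.assoc)
  also have "\<dots> \<le> (1 + t\<^sup>2) * (sqrt m * (sqrt m * (norm w)\<^sup>2))"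
    using Re_self[of x] assms m by (intro mult_left_mono mult_mono Re_self psd) simp_all
  also have "\<dots> = (1 + t\<^sup>2) * m * (norm w)\<^sup>2"
    using m by (simp add: mult.assoc[symmetric])
  finally have by_sector: "(cmod (cinner (A *v x) w))\<^sup>2 \<le> (1 + t\<^sup>2) * m * (norm w)\<^sup>2" .
  from by_opnorm by_sector show ?thesis
    unfolding m_def[symmetric] by (simp add: min_def)
qed

lemma cmod_cinner_le_sectorial:
  assumes "norm x = 1" "norm y = 1" "cinner x y = q"
  shows "cmod (cinner (A *v x) y)
    \<le> (sqrt ((1 - (cmod q)\<^sup>2) * min 2 (1 + t\<^sup>2)) + cmod q) * sqrt (opnorm (cadj A ** A + A ** cadj A) / 2)"
proof -
  define m where "m = opnorm (cadj A ** A + A ** cadj A) / 2"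
  obtain w where y: "y = cnj q *s x + w" and w: "(norm w)\<^sup>2 = 1 - (cmod q)\<^sup>2"
    using unit_vector_decomp[OF assms(1,2)] unfolding assms(3) .
  have "(cmod (cinner (A *v x) w))\<^sup>2 \<le> ((1 - (cmod q)\<^sup>2) * min 2 (1 + t\<^sup>2)) * m"
    using cmod_cinner_sq_le_min[OF assms(1), of w] by (simp add: w m_def mult_ac)
  then have w_bound: "cmod (cinner (A *v x) w) \<le> sqrt ((1 - (cmod q)\<^sup>2) * min 2 (1 + t\<^sup>2)) * sqrt m"
    unfolding real_sqrt_mult[symmetric] by (rule real_le_rsqrt)
  have x_bound: "cmod (cinner (A *v x) x) \<le> sqrt m"
    using cmod_cinner_mult_self_le_adj_sum[of A x] assms(1) by (simp add: m_def)
  have "cmod (cinner (A *v x) y) \<le> cmod q * cmod (cinner (A *v x) x) + cmod (cinner (A *v x) w)"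
    unfolding y cinner_add_right cinner_scalar_right complex_cnj_cnj
    using norm_triangle_ineq[of "q * cinner (A *v x) x"] by (simp add: norm_mult)
  also have "\<dots> \<le> cmod q * sqrt m + sqrt ((1 - (cmod q)\<^sup>2) * min 2 (1 + t\<^sup>2)) * sqrt m"
    by (intro add_mono mult_left_mono x_bound w_bound) simp
  finally show ?thesis by (simp add: m_def algebra_simps)
qed

lemma norm_im_part_mult_vec_le:
  assumes W: "0 \<le> W" and Re_self: "\<And>v. Re (cinner (A *v v) v) \<le> W * (norm v)\<^sup>2"
  shows "norm (herm_part (-\<i>) A *v v) \<le> t * W * norm v"
proof (rule norm_mult_vec_le_of_cinner_le)
  fix x y
  have "(cmod (cinner (herm_part (-\<i>) A *v x) y))\<^sup>2 \<le> t\<^sup>2 * (Re (cinner (A *v x) x) * Re (cinner (A *v y) y))"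
    using sectorial_im_part_cauchy_schwarz by (simp add: mult.assoc)
  also have "\<dots> \<le> t\<^sup>2 * ((W * (norm x)\<^sup>2) * (W * (norm y)\<^sup>2))"
    by (intro mult_left_mono mult_mono Re_self psd) (simp_all add: W)
  also have "\<dots> = (t * W * norm x * norm y)\<^sup>2"
    by (simp add: power_mult_distrib power2_eq_square mult_ac)
  finally show "cmod (cinner (herm_part (-\<i>) A *v x) y) \<le> t * W * norm x * norm y"
    by (rule power2_le_imp_le) (simp add: t W)
qed (simp add: t W)

lemma opnorm_adj_sum_le:
  assumes W: "0 \<le> W" and Re_self: "\<And>v. Re (cinner (A *v v) v) \<le> W * (norm v)\<^sup>2"
  shows "opnorm (cadj A ** A + A ** cadj A) \<le> 2 * (1 + t\<^sup>2) * W\<^sup>2"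
proof (rule opnorm_le, rule psd_norm_mult_vec_le)
  let ?P = "cadj A ** A + A ** cadj A"
  show "cadj ?P = ?P" by (simp add: cadj_add cadj_mult add.commute)
  fix v
  show "0 \<le> Re (cinner (?P *v v) v)" by (simp add: cinner_adj_sum_self)
  have H: "norm (herm_part 1 A *v v) \<le> W * norm v"
    using cadj_herm_part W by (rule psd_norm_mult_vec_le) (simp_all add: cinner_herm_part_self psd Re_self)
  have K: "norm (herm_part (-\<i>) A *v v) \<le> t * W * norm v"
    using W Re_self by (rule norm_im_part_mult_vec_le)
  have "Re (cinner (?P *v v) v) = 2 * ((norm (herm_part 1 A *v v))\<^sup>2 + (norm (herm_part (-\<i>) A *v v))\<^sup>2)"
    by (simp add: cinner_adj_sum_self norm_sq_add_adj_eq)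
  also have "\<dots> \<le> 2 * ((W * norm v)\<^sup>2 + (t * W * norm v)\<^sup>2)"
    by (intro mult_left_mono add_mono power_mono H K) simp_all
  also have "\<dots> = 2 * (1 + t\<^sup>2) * W\<^sup>2 * (norm v)\<^sup>2"
    by (simp add: power_mult_distrib algebra_simps)
  finally show "Re (cinner (?P *v v) v) \<le> 2 * (1 + t\<^sup>2) * W\<^sup>2 * (norm v)\<^sup>2" .
qed simp

lemma qnumrad_le_sectorial:
  assumes "CARD('n) \<ge> 2" "cmod q \<le> 1"
  shows "qnumrad q A
    \<le> (sqrt ((1 - (cmod q)\<^sup>2) * min 2 (1 + t\<^sup>2)) + cmod q) * sqrt (opnorm (cadj A ** A + A ** cadj A) / 2)"
  using assms by (rule qnumrad_le) (rule cmod_cinner_le_sectorial)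

lemma opnorm_adj_sum_le_qnumrad:
  assumes "CARD('n) \<ge> 2" "0 < cmod q" "cmod q \<le> 1"
  shows "opnorm (cadj A ** A + A ** cadj A) \<le> 2 * (1 + t\<^sup>2) * (qnumrad q A / cmod q)\<^sup>2"
proof (rule opnorm_adj_sum_le)
  show "0 \<le> qnumrad q A / cmod q"
    using qnumrad_nonneg[OF assms(1,3)] by simp
  fix v
  have "Re (cinner (A *v v) v) \<le> cmod (cinner (A *v v) v)" by (rule complex_Re_le_cmod)
  also have "\<dots> \<le> qnumrad q A / cmod q * (norm v)\<^sup>2"
    using assms by (rule cmod_cinner_mult_self_le_qnumrad)
  finally show "Re (cinner (A *v v) v) \<le> qnumrad q A / cmod q * (norm v)\<^sup>2" .
qed

end

(* No hypothesis on alpha: where cos alpha = 0, tan alpha = 0 by division by zero. *)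
lemma min_two_one_add_tan_sq_le:
  fixes \<alpha> :: real
  shows "min 2 (1 + (tan \<alpha>)\<^sup>2) \<le> 1 + 2 * (sin \<alpha>)\<^sup>2"
proof (cases "cos \<alpha> = 0")
  case False
  define k where "k = (cos \<alpha>)\<^sup>2"
  have k: "0 < k" "k \<le> 1" using False by (simp_all add: k_def abs_square_le_1)
  have tan: "1 + (tan \<alpha>)\<^sup>2 = 1 / k" and sin: "1 + 2 * (sin \<alpha>)\<^sup>2 = 3 - 2 * k"
    using False by (simp_all add: k_def tan_sec inverse_eq_divide power_one_over sin_squared_eq)
  show ?thesis
  proof (cases "k \<le> 1/2")
    case False
    then have "0 \<le> (2 * k - 1) * (1 - k)" using k by simp
    then have "1 \<le> (3 - 2 * k) * k" by (simp add: algebra_simps power2_eq_square)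
    then have "1 / k \<le> 3 - 2 * k" using k by (simp add: field_simps)
    then show ?thesis by (simp add: tan sin)
  qed (simp add: sin)
qed (simp add: tan_def)

theorem theorem2p16:
  fixes A :: "complex^'n^'n" and \<alpha> :: real and q :: complex
  assumes "CARD('n) \<ge> 2"
    and "0 \<le> \<alpha>" and "\<alpha> < pi / 2"
    and "A \<in> sectorial \<alpha>"
    and "0 < cmod q" and "cmod q \<le> 1"
  shows "(cmod q)\<^sup>2 * (cos \<alpha>)\<^sup>2 / 2 * opnorm (cadj A ** A + A ** cadj A) \<le> (qnumrad q A)\<^sup>2
    \<and> (qnumrad q A)\<^sup>2 \<le> (sqrt ((1 - (cmod q)\<^sup>2) * (1 + 2 * (sin \<alpha>)\<^sup>2)) + cmod q)\<^sup>2
          * opnorm (cadj A ** A + A ** cadj A) / 2"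
proof -
  let ?P = "cadj A ** A + A ** cadj A"
  have t: "0 \<le> tan \<alpha>" using assms(2,3) by (rule tan_pos_pi2_le)
  note psd = sectorial_cinner_bounds(1)[OF assms(4)]
    and sector = sectorial_cinner_bounds(2)[OF assms(4)]
  have "(cmod q)\<^sup>2 * (cos \<alpha>)\<^sup>2 / 2 * opnorm ?P
      \<le> (cmod q)\<^sup>2 * (cos \<alpha>)\<^sup>2 / 2 * (2 * (1 + (tan \<alpha>)\<^sup>2) * (qnumrad q A / cmod q)\<^sup>2)"
    using opnorm_adj_sum_le_qnumrad[OF t psd sector assms(1,5,6)] by (rule mult_left_mono) simp
  also have "\<dots> = (cos \<alpha>)\<^sup>2 * (1 + (tan \<alpha>)\<^sup>2) * (qnumrad q A)\<^sup>2"
    using assms(5) by (simp add: power_divide)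
  also have "\<dots> = (qnumrad q A)\<^sup>2"
    using cos_gt_zero_pi[of \<alpha>] assms(2,3) by (simp add: tan_sec field_simps)
  finally have lower: "(cmod q)\<^sup>2 * (cos \<alpha>)\<^sup>2 / 2 * opnorm ?P \<le> (qnumrad q A)\<^sup>2" .
  have "qnumrad q A \<le> (sqrt ((1 - (cmod q)\<^sup>2) * min 2 (1 + (tan \<alpha>)\<^sup>2)) + cmod q) * sqrt (opnorm ?P / 2)"
    using t psd sector assms(1,6) by (rule qnumrad_le_sectorial)
  also have "\<dots> \<le> (sqrt ((1 - (cmod q)\<^sup>2) * (1 + 2 * (sin \<alpha>)\<^sup>2)) + cmod q) * sqrt (opnorm ?P / 2)"
    using assms(6) min_two_one_add_tan_sq_le[of \<alpha>]
    by (intro mult_right_mono add_right_mono real_sqrt_le_mono mult_left_mono)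
       (simp_all add: abs_square_le_1 opnorm_nonneg)
  finally have "(qnumrad q A)\<^sup>2
      \<le> ((sqrt ((1 - (cmod q)\<^sup>2) * (1 + 2 * (sin \<alpha>)\<^sup>2)) + cmod q) * sqrt (opnorm ?P / 2))\<^sup>2"
    using qnumrad_nonneg[OF assms(1,6)] by (rule power_mono)
  also have "\<dots> = (sqrt ((1 - (cmod q)\<^sup>2) * (1 + 2 * (sin \<alpha>)\<^sup>2)) + cmod q)\<^sup>2 * opnorm ?P / 2"
    using opnorm_nonneg[of ?P] by (simp add: power_mult_distrib)
  finally have upper: "(qnumrad q A)\<^sup>2
      \<le> (sqrt ((1 - (cmod q)\<^sup>2) * (1 + 2 * (sin \<alpha>)\<^sup>2)) + cmod q)\<^sup>2 * opnorm ?P / 2" .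
  from lower upper show ?thesis ..
qed

end
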